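(* Let $A_1,A_2,B_1,B_2$ be $\{0,1\}$-valued random variables. Suppose a classical probability model for $(A_1,A_2,B_1)$ satisfies $\langle A_1\rangle=\langle A_2\rangle=\langle B_1\rangle=\tfrac12$ and $\langle A_1B_1\rangle=\langle A_2B_1\rangle=\tfrac14+\tfrac{\sqrt2}{8}$. Then in this model $\tfrac{\sqrt2}{4}\le\langle A_1A_2\rangle\le\tfrac12$. Suppose a classical probability model for $(A_1,A_2,B_2)$ satisfies $\langle A_1\rangle=\langle A_2\rangle=\langle B_2\rangle=\tfrac12$, $\langle A_1B_2\rangle=\tfrac14+\tfrac{\sqrt2}{8}$ and $\langle A_2B_2\rangle=\tfrac14-\tfrac{\sqrt2}{8}$. Then in this model $0\le\langle A_1A_2\rangle\le\tfrac12-\tfrac{\sqrt2}{4}$. In particular, since $\tfrac12-\tfrac{\sqrt2}{4}<\tfrac14<\tfrac{\sqrt2}{4}$, no common value of $\langle A_1A_2\rangle$ is possible in the two models.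
   Context: A classical probability model for a finite set of $\{0,1\}$-valued variables is a probability space on which they are realized as indicator functions; $\langle\cdot\rangle$ denotes expectation in that model. The given numbers are the quantum-mechanical predictions for two spin-$1/2$ particles in the singlet state $\tfrac{1}{\sqrt2}(|+-\rangle-|-+\rangle)$, with $A_1=\tfrac{1+\sigma_x}{2}$, $A_2=\tfrac{1+\sigma_z}{2}$ on the first particle and $B_1=\tfrac12-\tfrac{\tau_x+\tau_z}{2\sqrt2}$, $B_2=\tfrac12-\tfrac{\tau_x-\tau_z}{2\sqrt2}$ on the second ($\sigma_i,\tau_i$ Pauli matrices on the first and second particle). *)

theory Defs
  imports "HOL-Probability.Probability"
begin

definition bin_rv :: "'a measure \<Rightarrow> ('a \<Rightarrow> real) \<Rightarrow> bool" where
  "bin_rv M X \<longleftrightarrow> X \<in> borel_measurable M \<and> (\<forall>x\<in>space M. X x = 0 \<or> X x = 1)"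

definition classical_model3 ::
  "'a measure \<Rightarrow> ('a \<Rightarrow> real) \<Rightarrow> ('a \<Rightarrow> real) \<Rightarrow> ('a \<Rightarrow> real) \<Rightarrow> bool" where
  "classical_model3 M X Y Z \<longleftrightarrow> prob_space M \<and> bin_rv M X \<and> bin_rv M Y \<and> bin_rv M Z"

end

theory Submission
  imports Defs
begin

text \<open>For {0,1}-valued A1, A2, B the pointwise inequalities
  A1 B + A2 B - B \<le> A1 A2 \<le> A1 - A1 B + A2 B hold (check the eight cases); taking
  expectations bounds the correlation of A1 and A2 by their correlations with B.
  With the given numbers this pins the first model's value of \<langle>A1 A2\<rangle> to at least
  \<surd>2/4 and the second one's to at most 1/2 - \<surd>2/4 < \<surd>2/4.\<close>

lemma zero_one_mult:
  fixes a b :: real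
  assumes "a = 0 \<or> a = 1" "b = 0 \<or> b = 1"
  shows "a * b = 0 \<or> a * b = 1" "0 \<le> a * b" "a * b \<le> a"
  using assms by auto

lemma zero_one_mult_bounds_by_third:
  fixes a b c :: real
  assumes "a = 0 \<or> a = 1" "b = 0 \<or> b = 1" "c = 0 \<or> c = 1"
  shows "a * c + b * c - c \<le> a * b" "a * b \<le> a - a * c + b * c"
  using assms by auto

lemma integrable_bin_rv:
  assumes "prob_space M" "bin_rv M X"
  shows "integrable M X"
proof -
  interpret prob_space M by fact
  show ?thesis
    using assms(2) unfolding bin_rv_def
    by (intro integrable_const_bound[where B=1]) (auto intro!: AE_I2)
qed

lemma bin_rv_mult:
  assumes "bin_rv M X" "bin_rv M Y"
  shows "bin_rv M (\<lambda>x. X x * Y x)"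
  using assms zero_one_mult(1) unfolding bin_rv_def
  by (simp add: borel_measurable_times Ball_def del: mult_eq_0_iff)

lemma integral_mult_bin_rv_bounds:
  assumes "prob_space M" "bin_rv M X" "bin_rv M Y"
  shows "0 \<le> integral\<^sup>L M (\<lambda>x. X x * Y x)" "integral\<^sup>L M (\<lambda>x. X x * Y x) \<le> integral\<^sup>L M X"
proof -
  have int: "integrable M X" "integrable M (\<lambda>x. X x * Y x)"
    using assms by (auto intro: integrable_bin_rv bin_rv_mult)
  have bin: "X x = 0 \<or> X x = 1" "Y x = 0 \<or> Y x = 1" if "x \<in> space M" for x
    using assms(2,3) that unfolding bin_rv_def by auto
  show "0 \<le> integral\<^sup>L M (\<lambda>x. X x * Y x)"
    by (rule Bochner_Integration.integral_nonneg) (simp add: zero_one_mult(2) bin)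
  show "integral\<^sup>L M (\<lambda>x. X x * Y x) \<le> integral\<^sup>L M X"
    by (rule integral_mono[OF int(2,1)]) (simp add: zero_one_mult(3) bin)
qed

lemma integral_mult_bin_rv_lower:
  assumes "prob_space M" "bin_rv M X" "bin_rv M Y" "bin_rv M Z"
  shows "integral\<^sup>L M (\<lambda>x. X x * Z x) + integral\<^sup>L M (\<lambda>x. Y x * Z x) - integral\<^sup>L M Z
         \<le> integral\<^sup>L M (\<lambda>x. X x * Y x)"
proof -
  have int: "integrable M (\<lambda>x. X x * Z x)" "integrable M (\<lambda>x. Y x * Z x)" "integrable M Z"
    "integrable M (\<lambda>x. X x * Y x)"
    using assms by (auto intro: integrable_bin_rv bin_rv_mult)
  have "integral\<^sup>L M (\<lambda>x. X x * Z x + Y x * Z x - Z x) \<le> integral\<^sup>L M (\<lambda>x. X x * Y x)"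
    using assms(2-4) unfolding bin_rv_def
    by (intro integral_mono int Bochner_Integration.integrable_add Bochner_Integration.integrable_diff)
      (simp_all add: zero_one_mult_bounds_by_third(1))
  with int show ?thesis by simp
qed

lemma integral_mult_bin_rv_upper:
  assumes "prob_space M" "bin_rv M X" "bin_rv M Y" "bin_rv M Z"
  shows "integral\<^sup>L M (\<lambda>x. X x * Y x)
         \<le> integral\<^sup>L M X - integral\<^sup>L M (\<lambda>x. X x * Z x) + integral\<^sup>L M (\<lambda>x. Y x * Z x)"
proof -
  have int: "integrable M (\<lambda>x. X x * Z x)" "integrable M (\<lambda>x. Y x * Z x)" "integrable M X"
    "integrable M (\<lambda>x. X x * Y x)"
    using assms by (auto intro: integrable_bin_rv bin_rv_mult)
  have "integral\<^sup>L M (\<lambda>x. X x * Y x) \<le> integral\<^sup>L M (\<lambda>x. X x - X x * Z x + Y x * Z x)"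
    using assms(2-4) unfolding bin_rv_def
    by (intro integral_mono int Bochner_Integration.integrable_add Bochner_Integration.integrable_diff)
      (simp_all add: zero_one_mult_bounds_by_third(2))
  with int show ?thesis by simp
qed

lemma classical_model3_positively_correlated:
  assumes "classical_model3 M A1 A2 B"
    and "integral\<^sup>L M A1 = 1/2" "integral\<^sup>L M B = 1/2"
    and "integral\<^sup>L M (\<lambda>x. A1 x * B x) = 1/4 + sqrt 2 / 8"
    and "integral\<^sup>L M (\<lambda>x. A2 x * B x) = 1/4 + sqrt 2 / 8"
  shows "sqrt 2 / 4 \<le> integral\<^sup>L M (\<lambda>x. A1 x * A2 x) \<and>
         integral\<^sup>L M (\<lambda>x. A1 x * A2 x) \<le> 1/2"
  using assms integral_mult_bin_rv_lower[of M A1 A2 B] integral_mult_bin_rv_bounds[of M A1 A2]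
  unfolding classical_model3_def by simp

lemma classical_model3_weakly_correlated:
  assumes "classical_model3 M A1 A2 B"
    and "integral\<^sup>L M A1 = 1/2"
    and "integral\<^sup>L M (\<lambda>x. A1 x * B x) = 1/4 + sqrt 2 / 8"
    and "integral\<^sup>L M (\<lambda>x. A2 x * B x) = 1/4 - sqrt 2 / 8"
  shows "0 \<le> integral\<^sup>L M (\<lambda>x. A1 x * A2 x) \<and>
         integral\<^sup>L M (\<lambda>x. A1 x * A2 x) \<le> 1/2 - sqrt 2 / 4"
  using assms integral_mult_bin_rv_upper[of M A1 A2 B] integral_mult_bin_rv_bounds[of M A1 A2]
  unfolding classical_model3_def by simp

theorem mainTheorem2:
  shows
  "(\<forall>(M::'a measure) A1 A2 B1.
      classical_model3 M A1 A2 B1 \<and>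
      integral\<^sup>L M A1 = 1/2 \<and> integral\<^sup>L M A2 = 1/2 \<and> integral\<^sup>L M B1 = 1/2 \<and>
      integral\<^sup>L M (\<lambda>x. A1 x * B1 x) = 1/4 + sqrt 2 / 8 \<and>
      integral\<^sup>L M (\<lambda>x. A2 x * B1 x) = 1/4 + sqrt 2 / 8
      \<longrightarrow> sqrt 2 / 4 \<le> integral\<^sup>L M (\<lambda>x. A1 x * A2 x) \<and>
          integral\<^sup>L M (\<lambda>x. A1 x * A2 x) \<le> 1/2)
   \<and>
   (\<forall>(N::'b measure) A1 A2 B2.
      classical_model3 N A1 A2 B2 \<and>
      integral\<^sup>L N A1 = 1/2 \<and> integral\<^sup>L N A2 = 1/2 \<and> integral\<^sup>L N B2 = 1/2 \<and>
      integral\<^sup>L N (\<lambda>x. A1 x * B2 x) = 1/4 + sqrt 2 / 8 \<and>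
      integral\<^sup>L N (\<lambda>x. A2 x * B2 x) = 1/4 - sqrt 2 / 8
      \<longrightarrow> 0 \<le> integral\<^sup>L N (\<lambda>x. A1 x * A2 x) \<and>
          integral\<^sup>L N (\<lambda>x. A1 x * A2 x) \<le> 1/2 - sqrt 2 / 4)
   \<and>
   \<not> (\<exists>(M::'a measure) A1 A2 B1 (N::'b measure) C1 C2 B2.
      classical_model3 M A1 A2 B1 \<and>
      integral\<^sup>L M A1 = 1/2 \<and> integral\<^sup>L M A2 = 1/2 \<and> integral\<^sup>L M B1 = 1/2 \<and>
      integral\<^sup>L M (\<lambda>x. A1 x * B1 x) = 1/4 + sqrt 2 / 8 \<and>
      integral\<^sup>L M (\<lambda>x. A2 x * B1 x) = 1/4 + sqrt 2 / 8 \<and>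
      classical_model3 N C1 C2 B2 \<and>
      integral\<^sup>L N C1 = 1/2 \<and> integral\<^sup>L N C2 = 1/2 \<and> integral\<^sup>L N B2 = 1/2 \<and>
      integral\<^sup>L N (\<lambda>y. C1 y * B2 y) = 1/4 + sqrt 2 / 8 \<and>
      integral\<^sup>L N (\<lambda>y. C2 y * B2 y) = 1/4 - sqrt 2 / 8 \<and>
      integral\<^sup>L M (\<lambda>x. A1 x * A2 x) = integral\<^sup>L N (\<lambda>y. C1 y * C2 y))"
proof (intro conjI, goal_cases)
  case 1
  show ?case
    by (intro allI impI, elim conjE) (rule classical_model3_positively_correlated; assumption)
next
  case 2
  show ?case
    by (intro allI impI, elim conjE) (rule classical_model3_weakly_correlated; assumption)
next
  case 3
  have "1 < sqrt 2"
    by simp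
  then have gap: "1/2 - sqrt 2 / 4 < sqrt 2 / 4"
    by linarith
  show ?case
  proof (intro notI, elim exE conjE, goal_cases)
    case (1 M A1 A2 B1 N C1 C2 B2)
    from classical_model3_positively_correlated[OF 1(1,2,4-6)]
      classical_model3_weakly_correlated[OF 1(7,8,11,12)] 1(13) gap
    show False by linarith
  qed
qed

end
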